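(* Let $N, M, m \in \mathbb{N}$, $n_1,\dots,n_N\in\mathbb{N}$, let $\vec{A}\in\mathbb{K}^{M\times N}$ with columns $\vec{a}_1,\dots,\vec{a}_N$, and let $\vec{B}_i\in\mathbb{K}^{m\times n_i}$ for $i\in[N]$. Let $\vec{H}$ be the hierarchical measurement operator $$\vec{H}(\vec{x}_1,\dots,\vec{x}_N)=\sum_{i=1}^N \vec{a}_i\otimes(\vec{B}_i\vec{x}_i).$$ Let $s\in[N]$ and $\sigma=(\sigma_1,\dots,\sigma_N)$ with $\sigma_i\le n_i$. Assume each $\vec{B}_i$ satisfies the $\sigma_i$-RIP with constant $\delta_{\sigma_i}(\vec{B}_i)$, and $\vec{A}$ satisfies the $s$-RIP with constant $\delta_s(\vec{A})$. Then $$\delta_{(s,\sigma)}(\vec{H})\le \delta_s(\vec{A})+\sup_i\delta_{\sigma_i}(\vec{B}_i)+\delta_s(\vec{A})\cdot\sup_i\delta_{\sigma_i}(\vec{B}_i).$$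
   Context: $\mathbb{K}$ is $\mathbb{R}$ or $\mathbb{C}$; $[N]=\{1,\dots,N\}$; $\otimes$ is the tensor (Kronecker) product of vectors, with $\mathbb{K}^M\otimes\mathbb{K}^m\cong\mathbb{K}^{Mm}$ carrying the Euclidean norm; $\vec{H}$ maps $\mathbb{K}^{n_1}\times\dots\times\mathbb{K}^{n_N}$ (with Euclidean norm $\|\vec{x}\|^2=\sum_i\|\vec{x}_i\|^2$) into $\mathbb{K}^{Mm}$. The $k$-RIP constant $\delta_k(\vec{C})$ of a matrix $\vec{C}$ is the smallest $\delta\ge0$ with $(1-\delta)\|\vec{x}\|^2\le\|\vec{C}\vec{x}\|^2\le(1+\delta)\|\vec{x}\|^2$ for all $k$-sparse $\vec{x}$ (at most $k$ nonzero entries). A vector $\vec{x}=(\vec{x}_1,\dots,\vec{x}_N)\in\mathbb{K}^{n_1}\times\dots\times\mathbb{K}^{n_N}$ is $(s,\sigma)$-sparse if at most $s$ blocks $\vec{x}_i$ are nonzero and each nonzero block $\vec{x}_i$ has at most $\sigma_i$ nonzero entries. The $(s,\sigma)$-HiRIP constant $\delta_{(s,\sigma)}(\vec{H})$ is the smallest $\delta\ge0$ with $(1-\delta)\|\vec{x}\|^2\le\|\vec{H}\vec{x}\|^2\le(1+\delta)\|\vec{x}\|^2$ for all $(s,\sigma)$-sparse $\vec{x}$. *)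

theory Defs
  imports Complex_Main
begin

text \<open>Vectors in K^n are functions nat => 'a, entries indexed 0..n-1 (entries
at indices >= n are ignored). Matrices in K^(r x c) are functions nat => nat => 'a,
entry (row, column). The scalar field K is a real normed field ('a::real_normed_field),
which covers both real and complex.\<close>

definition vnorm2 :: "nat \<Rightarrow> (nat \<Rightarrow> 'a::real_normed_field) \<Rightarrow> real" where
  "vnorm2 n x = (\<Sum>j<n. (norm (x j))\<^sup>2)"

definition mat_vec :: "nat \<Rightarrow> (nat \<Rightarrow> nat \<Rightarrow> 'a::real_normed_field) \<Rightarrow> (nat \<Rightarrow> 'a) \<Rightarrow> (nat \<Rightarrow> 'a)" where
  "mat_vec ncols C x = (\<lambda>r. \<Sum>j<ncols. C r j * x j)"

definition sparse :: "nat \<Rightarrow> nat \<Rightarrow> (nat \<Rightarrow> 'a::zero) \<Rightarrow> bool" where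
  "sparse n k x \<longleftrightarrow> card {j. j < n \<and> x j \<noteq> 0} \<le> k"

definition rip_const :: "nat \<Rightarrow> nat \<Rightarrow> (nat \<Rightarrow> nat \<Rightarrow> 'a::real_normed_field) \<Rightarrow> nat \<Rightarrow> real" where
  "rip_const nrows ncols C k = Inf {\<delta>. \<delta> \<ge> 0 \<and> (\<forall>x. sparse ncols k x \<longrightarrow>
      (1 - \<delta>) * vnorm2 ncols x \<le> vnorm2 nrows (mat_vec ncols C x) \<and>
      vnorm2 nrows (mat_vec ncols C x) \<le> (1 + \<delta>) * vnorm2 ncols x)}"

text \<open>Block vectors x in K^(n_0) x ... x K^(n_(N-1)): x i j is entry j of block i.\<close>
definition hnorm2 :: "nat \<Rightarrow> (nat \<Rightarrow> nat) \<Rightarrow> (nat \<Rightarrow> nat \<Rightarrow> 'a::real_normed_field) \<Rightarrow> real" where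
  "hnorm2 N n x = (\<Sum>i<N. vnorm2 (n i) (x i))"

definition hsparse :: "nat \<Rightarrow> (nat \<Rightarrow> nat) \<Rightarrow> nat \<Rightarrow> (nat \<Rightarrow> nat) \<Rightarrow> (nat \<Rightarrow> nat \<Rightarrow> 'a::zero) \<Rightarrow> bool" where
  "hsparse N n s \<sigma> x \<longleftrightarrow>
     card {i. i < N \<and> (\<exists>j<n i. x i j \<noteq> 0)} \<le> s \<and>
     (\<forall>i<N. sparse (n i) (\<sigma> i) (x i))"

text \<open>Hierarchical operator H x = sum_i a_i \<otimes> (B_i x_i) in K^M \<otimes> K^m = K^(M*m),
Kronecker index convention: (a \<otimes> b)_(k*m + l) = a_k * b_l for k < M, l < m.\<close>
definition hier_op :: "nat \<Rightarrow> nat \<Rightarrow> (nat \<Rightarrow> nat) \<Rightarrow> (nat \<Rightarrow> nat \<Rightarrow> 'a::real_normed_field)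
     \<Rightarrow> (nat \<Rightarrow> nat \<Rightarrow> nat \<Rightarrow> 'a) \<Rightarrow> (nat \<Rightarrow> nat \<Rightarrow> 'a) \<Rightarrow> (nat \<Rightarrow> 'a)" where
  "hier_op N m n A B x = (\<lambda>p. \<Sum>i<N. A (p div m) i * mat_vec (n i) (B i) (x i) (p mod m))"

definition hirip_const :: "nat \<Rightarrow> nat \<Rightarrow> nat \<Rightarrow> (nat \<Rightarrow> nat) \<Rightarrow> (nat \<Rightarrow> nat \<Rightarrow> 'a::real_normed_field)
     \<Rightarrow> (nat \<Rightarrow> nat \<Rightarrow> nat \<Rightarrow> 'a) \<Rightarrow> nat \<Rightarrow> (nat \<Rightarrow> nat) \<Rightarrow> real" where
  "hirip_const N M m n A B s \<sigma> = Inf {\<delta>. \<delta> \<ge> 0 \<and> (\<forall>x. hsparse N n s \<sigma> x \<longrightarrow>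
      (1 - \<delta>) * hnorm2 N n x \<le> vnorm2 (M * m) (hier_op N m n A B x) \<and>
      vnorm2 (M * m) (hier_op N m n A B x) \<le> (1 + \<delta>) * hnorm2 N n x)}"

end

theory Submission imports Defs begin

text \<open>Slice a block vector x by the inner coordinate l of K^M \<otimes> K^m: the slice is the
vector (B_i x_i)_l indexed by the block i. Then |Hx|^2 is the sum over l of |A z_l|^2
with z_l the l-th slice, and the slices inherit s-sparsity from the block support of x.
Applying the RIP of A to every slice and then the RIP of each B_i to every block, the two
distortion factors multiply: (1 \<plusminus> \<delta>_A)(1 \<plusminus> \<delta>_B) lies within
1 \<plusminus> (\<delta>_A + \<delta>_B + \<delta>_A \<delta>_B).\<close>

definition within_distortion :: "real \<Rightarrow> real \<Rightarrow> real \<Rightarrow> bool" where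
  "within_distortion \<delta> a b \<longleftrightarrow> (1 - \<delta>) * a \<le> b \<and> b \<le> (1 + \<delta>) * a"

lemma within_distortion_mono:
  assumes "within_distortion \<delta> a b" and "\<delta> \<le> \<delta>'" and "0 \<le> a"
  shows "within_distortion \<delta>' a b"
proof -
  have "(1 - \<delta>') * a \<le> (1 - \<delta>) * a" and "(1 + \<delta>) * a \<le> (1 + \<delta>') * a"
    using assms(2,3) by (intro mult_right_mono; simp)+
  with assms(1) show ?thesis unfolding within_distortion_def by linarith
qed

lemma within_distortion_sum:
  assumes "\<And>i. i \<in> I \<Longrightarrow> within_distortion \<delta> (a i) (b i)"
  shows "within_distortion \<delta> (\<Sum>i\<in>I. a i) (\<Sum>i\<in>I. b i)"
  using assms unfolding within_distortion_def sum_distrib_left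
  by (auto intro: sum_mono)

lemma within_distortion_compose:
  assumes ab: "within_distortion \<delta> a b" and bc: "within_distortion \<epsilon> b c"
    and "0 \<le> \<delta>" and "0 \<le> \<epsilon>" and "0 \<le> a" and "0 \<le> c"
  shows "within_distortion (\<delta> + \<epsilon> + \<delta> * \<epsilon>) a c"
  unfolding within_distortion_def
proof
  show "(1 - (\<delta> + \<epsilon> + \<delta> * \<epsilon>)) * a \<le> c"
  proof (cases "\<epsilon> \<le> 1")
    case True
    have "0 \<le> \<delta> * \<epsilon> * a" using assms(3-5) by simp
    then have "(1 - (\<delta> + \<epsilon> + \<delta> * \<epsilon>)) * a \<le> (1 - \<epsilon>) * ((1 - \<delta>) * a)"
      by (simp add: algebra_simps)
    also have "\<dots> \<le> (1 - \<epsilon>) * b"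
      using ab True unfolding within_distortion_def by (intro mult_left_mono) auto
    also have "\<dots> \<le> c" using bc unfolding within_distortion_def by simp
    finally show ?thesis .
  next
    case False
    moreover have "0 \<le> \<delta> * \<epsilon>" using assms(3,4) by simp
    ultimately have "1 - (\<delta> + \<epsilon> + \<delta> * \<epsilon>) \<le> 0" using assms(3) by linarith
    then have "(1 - (\<delta> + \<epsilon> + \<delta> * \<epsilon>)) * a \<le> 0"
      using assms(5) by (rule mult_nonpos_nonneg)
    with \<open>0 \<le> c\<close> show ?thesis by linarith
  qed
next
  have "c \<le> (1 + \<epsilon>) * b" using bc unfolding within_distortion_def by simp
  also have "\<dots> \<le> (1 + \<epsilon>) * ((1 + \<delta>) * a)"
    using ab \<open>0 \<le> \<epsilon>\<close> unfolding within_distortion_def by (intro mult_left_mono) auto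
  also have "\<dots> = (1 + (\<delta> + \<epsilon> + \<delta> * \<epsilon>)) * a" by (simp add: algebra_simps)
  finally show "c \<le> (1 + (\<delta> + \<epsilon> + \<delta> * \<epsilon>)) * a" .
qed

lemma within_distortion_Inf:
  assumes "S \<noteq> {}" and S: "\<And>\<delta>. \<delta> \<in> S \<Longrightarrow> 0 \<le> \<delta> \<and> within_distortion \<delta> a b"
    and "0 \<le> a"
  shows "within_distortion (Inf S) a b"
proof -
  obtain \<delta>\<^sub>0 where "\<delta>\<^sub>0 \<in> S" using assms(1) by blast
  show ?thesis
  proof (cases "a = 0")
    case True
    with S[OF \<open>\<delta>\<^sub>0 \<in> S\<close>] show ?thesis unfolding within_distortion_def by simp
  next
    case False
    with \<open>0 \<le> a\<close> have "0 < a" by simp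
    have "(a - b) / a \<le> \<delta>" and "(b - a) / a \<le> \<delta>" if "\<delta> \<in> S" for \<delta>
      using S[OF that] \<open>0 < a\<close> unfolding within_distortion_def
      by (simp_all add: pos_divide_le_eq algebra_simps)
    then have "(a - b) / a \<le> Inf S" and "(b - a) / a \<le> Inf S"
      by (meson cInf_greatest[OF assms(1)])+
    then have "a - b \<le> Inf S * a" and "b - a \<le> Inf S * a"
      using \<open>0 < a\<close> by (simp_all add: pos_divide_le_eq)
    then show ?thesis unfolding within_distortion_def by (simp add: algebra_simps)
  qed
qed

lemma vnorm2_nonneg: "0 \<le> vnorm2 n x"
  unfolding vnorm2_def by (simp add: sum_nonneg)

lemma vnorm2_mat_vec_le:
  fixes C :: "nat \<Rightarrow> nat \<Rightarrow> 'a::real_normed_field"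
  shows "vnorm2 nr (mat_vec nc C x) \<le> (\<Sum>r<nr. (\<Sum>j<nc. norm (C r j))\<^sup>2) * vnorm2 nc x"
proof -
  let ?a = "vnorm2 nc x"
  have entry: "norm (x j) \<le> sqrt ?a" if "j < nc" for j
  proof -
    have "(norm (x j))\<^sup>2 \<le> ?a" unfolding vnorm2_def
      using that by (intro member_le_sum) auto
    then show ?thesis by (simp add: real_le_rsqrt)
  qed
  have row: "(norm (mat_vec nc C x r))\<^sup>2 \<le> (\<Sum>j<nc. norm (C r j))\<^sup>2 * ?a" for r
  proof -
    have "norm (mat_vec nc C x r) \<le> (\<Sum>j<nc. norm (C r j) * norm (x j))"
      unfolding mat_vec_def by (rule order_trans[OF norm_sum]) (simp add: norm_mult)
    also have "\<dots> \<le> (\<Sum>j<nc. norm (C r j)) * sqrt ?a"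
      unfolding sum_distrib_right by (intro sum_mono mult_left_mono entry) auto
    finally have "(norm (mat_vec nc C x r))\<^sup>2 \<le> ((\<Sum>j<nc. norm (C r j)) * sqrt ?a)\<^sup>2"
      by (intro power_mono) auto
    then show ?thesis using vnorm2_nonneg[of nc x] by (simp add: power_mult_distrib)
  qed
  show ?thesis unfolding vnorm2_def[of nr] sum_distrib_right by (intro sum_mono row)
qed

lemma rip_const_eq:
  "rip_const nr nc C k = Inf {\<delta>. 0 \<le> \<delta> \<and> (\<forall>x. sparse nc k x \<longrightarrow>
      within_distortion \<delta> (vnorm2 nc x) (vnorm2 nr (mat_vec nc C x)))}"
  unfolding rip_const_def within_distortion_def ..

lemma mat_vec_within_distortion:
  fixes C :: "nat \<Rightarrow> nat \<Rightarrow> 'a::real_normed_field"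
  shows "within_distortion (1 + (\<Sum>r<nr. (\<Sum>j<nc. norm (C r j))\<^sup>2))
           (vnorm2 nc x) (vnorm2 nr (mat_vec nc C x))"
proof -
  define K where "K = (\<Sum>r<nr. (\<Sum>j<nc. norm (C r j))\<^sup>2)"
  have "0 \<le> K" unfolding K_def by (simp add: sum_nonneg)
  have "vnorm2 nr (mat_vec nc C x) \<le> K * vnorm2 nc x"
    unfolding K_def by (rule vnorm2_mat_vec_le)
  also have "\<dots> \<le> (1 + (1 + K)) * vnorm2 nc x"
    by (intro mult_right_mono vnorm2_nonneg) simp
  finally have "vnorm2 nr (mat_vec nc C x) \<le> (1 + (1 + K)) * vnorm2 nc x" .
  moreover have "(1 - (1 + K)) * vnorm2 nc x \<le> 0"
    using \<open>0 \<le> K\<close> by (intro mult_nonpos_nonneg vnorm2_nonneg) simp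
  ultimately show ?thesis
    unfolding within_distortion_def K_def[symmetric]
    using vnorm2_nonneg[of nr "mat_vec nc C x"] by auto
qed

lemma rip_bounds_nonempty:
  fixes C :: "nat \<Rightarrow> nat \<Rightarrow> 'a::real_normed_field"
  shows "{\<delta>. 0 \<le> \<delta> \<and> (\<forall>x. sparse nc k x \<longrightarrow>
      within_distortion \<delta> (vnorm2 nc x) (vnorm2 nr (mat_vec nc C x)))} \<noteq> {}"
proof -
  have "0 \<le> 1 + (\<Sum>r<nr. (\<Sum>j<nc. norm (C r j))\<^sup>2)" by (simp add: sum_nonneg add_nonneg_nonneg)
  then show ?thesis using mat_vec_within_distortion by blast
qed

lemma rip_const_nonneg: "0 \<le> rip_const nr nc (C :: nat \<Rightarrow> nat \<Rightarrow> 'a::real_normed_field) k"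
  unfolding rip_const_eq by (rule cInf_greatest[OF rip_bounds_nonempty]) blast

text \<open>The infimum defining the RIP constant is attained, since the RIP inequalities for a
fixed x are closed conditions on \<delta>.\<close>
lemma rip_const_distortion:
  fixes C :: "nat \<Rightarrow> nat \<Rightarrow> 'a::real_normed_field"
  assumes "sparse nc k x"
  shows "within_distortion (rip_const nr nc C k) (vnorm2 nc x) (vnorm2 nr (mat_vec nc C x))"
  unfolding rip_const_eq
  by (rule within_distortion_Inf[OF rip_bounds_nonempty _ vnorm2_nonneg]) (use assms in blast)

lemma hirip_const_le:
  assumes "0 \<le> \<delta>"
    and "\<And>x. hsparse N n s \<sigma> x \<Longrightarrow>
           within_distortion \<delta> (hnorm2 N n x) (vnorm2 (M * m) (hier_op N m n A B x))"
  shows "hirip_const N M m n A B s \<sigma> \<le> \<delta>"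
  unfolding hirip_const_def using assms unfolding within_distortion_def
  by (intro cInf_lower bdd_belowI[of _ 0]) auto

lemma sum_lessThan_mult:
  fixes M m :: nat
  shows "(\<Sum>p<M * m. g p) = (\<Sum>k<M. \<Sum>l<m. g (k * m + l))"
proof -
  have "sum g {k * m..<k * m + m} = (\<Sum>l<m. g (k * m + l))" for k
    using sum.shift_bounds_nat_ivl[of g 0 "k * m" m] by (simp add: add.commute atLeast0LessThan)
  then show ?thesis by (simp add: sum.nat_group[symmetric])
qed

lemma vnorm2_hier_op:
  "vnorm2 (M * m) (hier_op N m n A B x) =
     (\<Sum>l<m. vnorm2 M (mat_vec N A (\<lambda>i. mat_vec (n i) (B i) (x i) l)))"
proof -
  have "vnorm2 (M * m) (hier_op N m n A B x) =
      (\<Sum>k<M. \<Sum>l<m. (norm (hier_op N m n A B x (k * m + l)))\<^sup>2)"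
    unfolding vnorm2_def by (rule sum_lessThan_mult)
  also have "\<dots> = (\<Sum>k<M. \<Sum>l<m. (norm (mat_vec N A (\<lambda>i. mat_vec (n i) (B i) (x i) l) k))\<^sup>2)"
    by (intro sum.cong refl) (simp add: hier_op_def mat_vec_def)
  also have "\<dots> = (\<Sum>l<m. vnorm2 M (mat_vec N A (\<lambda>i. mat_vec (n i) (B i) (x i) l)))"
    unfolding vnorm2_def by (rule sum.swap)
  finally show ?thesis .
qed

lemma hsparse_slice_sparse:
  assumes "hsparse N n s \<sigma> x"
  shows "sparse N s (\<lambda>i. mat_vec (n i) (B i) (x i) l)"
proof -
  have "mat_vec (n i) (B i) (x i) l = 0" if "\<forall>j<n i. x i j = 0" for i
    using that by (simp add: mat_vec_def)
  then have "{i. i < N \<and> mat_vec (n i) (B i) (x i) l \<noteq> 0} \<subseteq> {i. i < N \<and> (\<exists>j<n i. x i j \<noteq> 0)}"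
    by blast
  then have "card {i. i < N \<and> mat_vec (n i) (B i) (x i) l \<noteq> 0}
      \<le> card {i. i < N \<and> (\<exists>j<n i. x i j \<noteq> 0)}"
    by (intro card_mono) auto
  with assms show ?thesis unfolding sparse_def hsparse_def by simp
qed

lemma hier_op_distortion:
  fixes A :: "nat \<Rightarrow> nat \<Rightarrow> 'a::real_normed_field"
  assumes x: "hsparse N n s \<sigma> x"
    and dB: "\<And>i. i < N \<Longrightarrow> rip_const m (n i) (B i) (\<sigma> i) \<le> \<delta>\<^sub>B" and "0 \<le> \<delta>\<^sub>B"
  shows "within_distortion (rip_const M N A s + \<delta>\<^sub>B + rip_const M N A s * \<delta>\<^sub>B)
           (hnorm2 N n x) (vnorm2 (M * m) (hier_op N m n A B x))"
proof -
  let ?y = "\<lambda>i. mat_vec (n i) (B i) (x i)"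
  have blocks: "within_distortion \<delta>\<^sub>B (hnorm2 N n x) (\<Sum>i<N. vnorm2 m (?y i))"
    unfolding hnorm2_def
  proof (intro within_distortion_sum)
    fix i assume "i \<in> {..<N}"
    with x have "sparse (n i) (\<sigma> i) (x i)" unfolding hsparse_def by auto
    with \<open>i \<in> {..<N}\<close> show "within_distortion \<delta>\<^sub>B (vnorm2 (n i) (x i)) (vnorm2 m (?y i))"
      by (intro within_distortion_mono[OF rip_const_distortion] vnorm2_nonneg) (auto intro: dB)
  qed
  have "(\<Sum>i<N. vnorm2 m (?y i)) = (\<Sum>l<m. vnorm2 N (\<lambda>i. ?y i l))"
    unfolding vnorm2_def by (rule sum.swap)
  then have slices: "within_distortion (rip_const M N A s)
      (\<Sum>i<N. vnorm2 m (?y i)) (vnorm2 (M * m) (hier_op N m n A B x))"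
    unfolding vnorm2_hier_op
    by (simp only:) (intro within_distortion_sum rip_const_distortion hsparse_slice_sparse[OF x])
  have "0 \<le> hnorm2 N n x" unfolding hnorm2_def by (simp add: sum_nonneg vnorm2_nonneg)
  then have "within_distortion (\<delta>\<^sub>B + rip_const M N A s + \<delta>\<^sub>B * rip_const M N A s)
      (hnorm2 N n x) (vnorm2 (M * m) (hier_op N m n A B x))"
    by (rule within_distortion_compose[OF blocks slices \<open>0 \<le> \<delta>\<^sub>B\<close> rip_const_nonneg _ vnorm2_nonneg])
  then show ?thesis by (simp add: ac_simps)
qed

theorem theorem1:
  fixes N M m :: nat and n :: "nat \<Rightarrow> nat"
    and A :: "nat \<Rightarrow> nat \<Rightarrow> 'a::real_normed_field"
    and B :: "nat \<Rightarrow> nat \<Rightarrow> nat \<Rightarrow> 'a"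
    and s :: nat and \<sigma> :: "nat \<Rightarrow> nat"
  assumes "1 \<le> s" and "s \<le> N"
    and "\<forall>i<N. \<sigma> i \<le> n i"
  shows "hirip_const N M m n A B s \<sigma> \<le>
           rip_const M N A s + (MAX i\<in>{..<N}. rip_const m (n i) (B i) (\<sigma> i))
           + rip_const M N A s * (MAX i\<in>{..<N}. rip_const m (n i) (B i) (\<sigma> i))"
proof -
  define \<delta>\<^sub>B where "\<delta>\<^sub>B = (MAX i\<in>{..<N}. rip_const m (n i) (B i) (\<sigma> i))"
  have dB: "rip_const m (n i) (B i) (\<sigma> i) \<le> \<delta>\<^sub>B" if "i < N" for i
    unfolding \<delta>\<^sub>B_def using that by (intro Max_ge) auto
  have "0 \<le> \<delta>\<^sub>B"
    using dB[of 0] rip_const_nonneg[of m "n 0" "B 0" "\<sigma> 0"] assms(1,2) by simp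
  show ?thesis
    unfolding \<delta>\<^sub>B_def[symmetric]
  proof (rule hirip_const_le)
    show "0 \<le> rip_const M N A s + \<delta>\<^sub>B + rip_const M N A s * \<delta>\<^sub>B"
      using \<open>0 \<le> \<delta>\<^sub>B\<close> rip_const_nonneg[of M N A s] by simp
  qed (rule hier_op_distortion[OF _ dB \<open>0 \<le> \<delta>\<^sub>B\<close>])
qed

end
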